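(* Let $n$ be a positive integer, $1\le k\le n$, and $w\in\mathfrak S_n$. For any $X\in\binom{[n]}{k+1}$, the intersection $P(X)\cap\mathrm{Inv}_k(w)$ is one of the following: $\emptyset$; $\{X_i\}$ for some $i\in[k+1]$; $\{X_i,X_{i+1}\}$ for some $i\in[k]$; or the entire packet $P(X)$.
   Context: $\mathfrak S_n$ is the symmetric group on $[n]=\{1,\dots,n\}$. $\binom{[n]}{m}$ is the set of $m$-element subsets of $[n]$, each written $[x_1,\dots,x_m]$ with $x_1<\dots<x_m$. For $X=[x_1,\dots,x_m]$ and $i\in[m]$, $X_i$ is $X$ with $x_i$ removed, and $P(X)=\{X_1,\dots,X_m\}$. $\mathrm{Inv}_m(w)=\{[x_1,\dots,x_m]\in\binom{[n]}{m}: w^{-1}(x_1)>\dots>w^{-1}(x_m)\}$. *)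

theory Defs
  imports "HOL-Combinatorics.Permutations"
begin

definition subsets :: "nat \<Rightarrow> nat \<Rightarrow> nat set set" where
  "subsets n m = {X. X \<subseteq> {1..n} \<and> card X = m}"

definition elt :: "nat set \<Rightarrow> nat \<Rightarrow> nat" where
  "elt X i = sorted_list_of_set X ! (i - 1)"

definition del :: "nat set \<Rightarrow> nat \<Rightarrow> nat set" where
  "del X i = X - {elt X i}"

definition packet :: "nat set \<Rightarrow> nat set set" where
  "packet X = {del X i | i. 1 \<le> i \<and> i \<le> card X}"

definition Inv :: "nat \<Rightarrow> nat \<Rightarrow> (nat \<Rightarrow> nat) \<Rightarrow> nat set set" where
  "Inv n m w = {X \<in> subsets n m.
     \<forall>i. 1 \<le> i \<and> i < m \<longrightarrow> inv w (elt X i) > inv w (elt X (i + 1))}"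

end

theory Submission imports Defs begin

text \<open>Write \<open>s j = w\<inverse>(x\<^sub>j)\<close>, so \<open>X \<in> Inv\<^sub>k\<^sub>+\<^sub>1(w)\<close> says that \<open>s\<close> is strictly decreasing on
  \<open>1..k+1\<close>, and \<open>X\<^sub>i \<in> Inv\<^sub>k(w)\<close> says the same of \<open>s\<close> with the \<open>i\<close>-th entry skipped.
  If \<open>s\<close> is decreasing, so is every such subsequence and the whole packet lies in \<open>Inv\<^sub>k(w)\<close>.
  Otherwise \<open>s\<close> has an ascent \<open>s j \<le> s (j+1)\<close>, which survives in the subsequence unless
  one of its two entries is skipped; hence only \<open>X\<^sub>j\<close> and \<open>X\<^sub>j\<^sub>+\<^sub>1\<close> can lie in \<open>Inv\<^sub>k(w)\<close>.\<close>

definition descending :: "nat \<Rightarrow> (nat \<Rightarrow> 'a::linorder) \<Rightarrow> bool" where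
  "descending m s \<longleftrightarrow> (\<forall>j. 1 \<le> j \<and> j < m \<longrightarrow> s (Suc j) < s j)"

definition skip :: "nat \<Rightarrow> (nat \<Rightarrow> 'a) \<Rightarrow> nat \<Rightarrow> 'a" where
  "skip i s j = (if j < i then s j else s (Suc j))"

lemma descending_less:
  assumes "descending m s" "1 \<le> a" "a < b" "b \<le> m"
  shows "s b < s a"
proof -
  have "Suc a \<le> b" using assms(3) by simp
  then show ?thesis using assms(4)
  proof (induction b rule: dec_induct)
    case base
    then show ?case using assms(1,2) unfolding descending_def by simp
  next
    case (step b)
    then have "s (Suc b) < s b" using assms(1,2) unfolding descending_def by simp
    with step show ?case by simp
  qed
qed

lemma descending_skip:
  assumes "descending (Suc m) s"
  shows "descending m (skip i s)"
  unfolding descending_def skip_def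
proof (intro allI impI)
  fix j assume j: "1 \<le> j \<and> j < m"
  have "s (Suc (Suc j)) < s j"
    using descending_less[OF assms, of j "Suc (Suc j)"] j by simp
  moreover have "s (Suc j) < s j" "s (Suc (Suc j)) < s (Suc j)"
    using assms j unfolding descending_def by simp_all
  ultimately show "(if Suc j < i then s (Suc j) else s (Suc (Suc j)))
      < (if j < i then s j else s (Suc j))"
    by simp
qed

lemma descending_skip_ascent:
  assumes "descending m (skip i s)" "1 \<le> i" "i \<le> Suc m" "1 \<le> j" "j \<le> m"
    and "\<not> s (Suc j) < s j"
  shows "i = j \<or> i = Suc j"
proof (rule ccontr)
  assume "\<not> (i = j \<or> i = Suc j)"
  then consider "Suc j < i" | "i < j" by linarith
  then show False
  proof cases
    case 1
    then have "skip i s (Suc j) < skip i s j"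
      using assms(1,3,4) unfolding descending_def by simp
    with 1 assms(6) show False unfolding skip_def by simp
  next
    case 2
    then obtain j' where j': "j = Suc j'" "1 \<le> j'"
      using assms(2) by (cases j) auto
    then have "skip i s (Suc j') < skip i s j'"
      using assms(1,5) unfolding descending_def by simp
    with 2 j' assms(6) show False unfolding skip_def by simp
  qed
qed

lemma descending_skip_indices:
  fixes m :: nat and s :: "nat \<Rightarrow> 'a::linorder"
  defines "D \<equiv> {i \<in> {1..Suc m}. descending m (skip i s)}"
  shows "D = {1..Suc m} \<or> D = {} \<or> (\<exists>i. 1 \<le> i \<and> i \<le> Suc m \<and> D = {i})
    \<or> (\<exists>i. 1 \<le> i \<and> i \<le> m \<and> D = {i, Suc i})"
proof (cases "descending (Suc m) s")
  case True
  then show ?thesis unfolding D_def using descending_skip by blast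
next
  case False
  then obtain j where j: "1 \<le> j" "j \<le> m" "\<not> s (Suc j) < s j"
    unfolding descending_def by auto
  then have "D \<subseteq> {j, Suc j}"
    unfolding D_def using descending_skip_ascent[OF _ _ _ j] by auto
  then have "D = {} \<or> D = {j} \<or> D = {Suc j} \<or> D = {j, Suc j}" by blast
  moreover have "j \<le> Suc m" "1 \<le> Suc j" "Suc j \<le> Suc m" using j by simp_all
  ultimately show ?thesis using j(1,2) by blast
qed

lemma remove1_nth:
  assumes "distinct xs" "p < length xs"
  shows "remove1 (xs ! p) xs = take p xs @ drop (Suc p) xs"
proof -
  have "xs = take p xs @ xs ! p # drop (Suc p) xs"
    using assms(2) by (simp add: id_take_nth_drop)
  moreover have "xs ! p \<notin> set (take p xs)"
    using assms by (auto simp: in_set_conv_nth nth_eq_iff_index_eq)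
  ultimately show ?thesis
    by (metis remove1.simps(2) remove1_append)
qed

lemma elt_del:
  assumes "finite X" "1 \<le> i" "i \<le> card X" "1 \<le> j" "j < card X"
  shows "elt (del X i) j = skip i (elt X) j"
proof -
  let ?xs = "sorted_list_of_set X"
  have "sorted_list_of_set (del X i) = remove1 (?xs ! (i - 1)) ?xs"
    unfolding del_def elt_def using assms(1) by (simp add: sorted_list_of_set_remove)
  also have "\<dots> = take (i - 1) ?xs @ drop i ?xs"
    using remove1_nth[of ?xs "i - 1"] assms by simp
  finally have "sorted_list_of_set (del X i) = take (i - 1) ?xs @ drop i ?xs" .
  then show ?thesis
    unfolding elt_def skip_def using assms by (auto simp: nth_append min_def)
qed

lemma Inv_iff_descending:
  "X \<in> Inv n m w \<longleftrightarrow> X \<in> subsets n m \<and> descending m (\<lambda>j. inv w (elt X j))"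
  unfolding Inv_def descending_def by auto

lemma del_in_subsets:
  assumes "X \<in> subsets n (Suc m)" "1 \<le> i" "i \<le> Suc m"
  shows "del X i \<in> subsets n m"
proof -
  have X: "finite X" "card X = Suc m" "X \<subseteq> {1..n}"
    using assms(1) finite_subset unfolding subsets_def by auto
  then have "i - 1 < length (sorted_list_of_set X)" using assms(2,3) by simp
  then have "elt X i \<in> X" unfolding elt_def using X(1) by (metis nth_mem set_sorted_list_of_set)
  with X show ?thesis unfolding subsets_def del_def by auto
qed

lemma packet_eq_image: "packet X = del X ` {1..card X}"
  unfolding packet_def by auto

lemma packet_Inv_eq_image:
  assumes "X \<in> subsets n (Suc m)"
  shows "packet X \<inter> Inv n m w =
    del X ` {i \<in> {1..Suc m}. descending m (skip i (\<lambda>j. inv w (elt X j)))}"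
proof -
  have fin: "finite X" and card: "card X = Suc m"
    using assms finite_subset unfolding subsets_def by auto
  have "del X i \<in> Inv n m w \<longleftrightarrow> descending m (skip i (\<lambda>j. inv w (elt X j)))"
    if "1 \<le> i" "i \<le> Suc m" for i
  proof -
    have "inv w (elt (del X i) j) = skip i (\<lambda>j. inv w (elt X j)) j" if "1 \<le> j" "j \<le> m" for j
      using elt_del[OF fin \<open>1 \<le> i\<close>, of j] \<open>i \<le> Suc m\<close> that card by (simp add: skip_def)
    then have "descending m (\<lambda>j. inv w (elt (del X i) j))
        \<longleftrightarrow> descending m (skip i (\<lambda>j. inv w (elt X j)))"
      unfolding descending_def by auto
    then show ?thesis
      using Inv_iff_descending del_in_subsets[OF assms that] by blast
  qed
  then show ?thesis unfolding packet_eq_image card by auto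
qed

theorem lemma3p2:
  fixes n k :: nat and w :: "nat \<Rightarrow> nat" and X :: "nat set"
  assumes "0 < n" and "1 \<le> k" and "k \<le> n"
    and "w permutes {1..n}"
    and "X \<in> subsets n (k + 1)"
  shows "packet X \<inter> Inv n k w = {}
    \<or> (\<exists>i. 1 \<le> i \<and> i \<le> k + 1 \<and> packet X \<inter> Inv n k w = {del X i})
    \<or> (\<exists>i. 1 \<le> i \<and> i \<le> k \<and> packet X \<inter> Inv n k w = {del X i, del X (i + 1)})
    \<or> packet X \<inter> Inv n k w = packet X"
proof -
  define D where "D = {i \<in> {1..Suc k}. descending k (skip i (\<lambda>j. inv w (elt X j)))}"
  have packet_Inv: "packet X \<inter> Inv n k w = del X ` D"
    using packet_Inv_eq_image[of X n k w] assms(5) unfolding D_def by simp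
  have "card X = k + 1" using assms(5) unfolding subsets_def by simp
  from descending_skip_indices[of k "\<lambda>j. inv w (elt X j)", folded D_def]
  consider "D = {1..k + 1}" | "D = {}"
    | i where "1 \<le> i" "i \<le> k + 1" "D = {i}"
    | i where "1 \<le> i" "i \<le> k" "D = {i, i + 1}"
    unfolding Suc_eq_plus1 by blast
  then show ?thesis
  proof cases
    case 1
    then show ?thesis using packet_Inv \<open>card X = k + 1\<close> unfolding packet_eq_image by simp
  next
    case 2
    then show ?thesis using packet_Inv by simp
  next
    case (3 i)
    then have "packet X \<inter> Inv n k w = {del X i}" using packet_Inv by simp
    with 3 show ?thesis by blast
  next
    case (4 i)
    then have "packet X \<inter> Inv n k w = {del X i, del X (i + 1)}" using packet_Inv by simp
    with 4 show ?thesis by blast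
  qed
qed

end
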